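(* Let $\Theta(z,w) := \theta{0 \brack 0}(z,\tau) + \theta{-r_1 \brack r_2}(z,\tau)\,\mathbf{e}(w)$. Take any $u \in \Omega + \kappa(\varepsilon)$. Then $\Theta(u - \beta_k(u)) = 0$ if and only if $\Theta(u - \beta_\ell(u)) = 0$, for any $k, \ell \in \mathbb{Z}$.
   Context: Setting: $X = \mathbb{C}/\Lambda$ is an elliptic curve with period matrix $(1\ \tau)$, $\mathfrak{Im}(\tau)>0$. $S=\{P_1,P_2\}\subset X$, $P_1\neq P_2$, and $X_{\mathfrak m}$ is the singular curve with an ordinary double point obtained by identifying $P_1$ and $P_2$ (modulus $\mathfrak m(P_1)=\mathfrak m(P_2)=1$); $\rho: X\to X_{\mathfrak m}$ is the projection. $\{\alpha,\beta\}$ is a homology basis of $X$ avoiding $P_1,P_2$, with common initial point $Q_0$; $\gamma_1,\gamma_2$ are small anticlockwise circles centered at $P_1,P_2$ (radius of $\gamma_2$ is $\varepsilon$), bounding open disks $U_1,U_2$. $\{\omega,\eta\}$ is a basis of $H^0(X_{\mathfrak m},\Omega_{\mathfrak m})$ with $\rho^*\omega$ holomorphic, normalized so that $\int_{\gamma_1}\rho^*\omega=0$, $\int_\alpha\rho^*\omega=1$, $\int_\beta\rho^*\omega=\tau$, $\int_{\gamma_1}\rho^*\eta=1$, $\int_\alpha\rho^*\eta=r_1$, $\int_\beta\rho^*\eta=r_2$ with $r_1,r_2\in\mathbb R$; $\Gamma\subset\mathbb C^2$ is the group generated by $(0,1),(1,r_1),(\tau,r_2)$. $\mathbf{e}(x):=\exp(2\pi\sqrt{-1}x)$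 and $\theta{a \brack b}(z,\tau):=\sum_{n\in\mathbb Z}\mathbf e[\frac12(n+a)^2\tau+(n+a)(z+b)]$. The period map is $\varphi=(\varphi_1,\varphi_2)$, $\varphi_1(P)=\int_{P_0}^P\rho^*\omega$, $\varphi_2(P)=\int_{P_0}^P\rho^*\eta$ for a fixed $P_0\in X\setminus S$ (in the cut domain). For $c\in\mathbb C^2$, $\mathfrak T_c(P):=\Theta(\varphi_1(P)-c_1,\varphi_2(P)-c_2)$; it has a simple pole at $P_2$. With a local coordinate $t$ on $\overline{U_2}$, $t(P_2)=0$, write $\mathfrak T_c(t)=c_{-1}/t+h_2(t;c)$, $\mathfrak T_c'(t)/\mathfrak T_c(t)=-1/t+h_3(t;c)$, $H_3(t;c):=\int_0^t h_3(t;c)\,dt$, and define $d(t):\mathbb C^2\to\mathbb C^2$, $d(t)(c):=(c_1,\ c_1r_1+\frac{1}{2\pi\sqrt{-1}}H_3(t;c))$, and $N_t:=\{c:\partial H_3(t;c)/\partial c_2=0\}$. Let $a(\varepsilon):=\int_0^1\varphi_2(\varepsilon\mathbf e(u))\,du$ and the generalized Riemann constant $\kappa(\varepsilon)=(\kappa_1,\kappa_2(\varepsilon))$ with $\kappa_1:=-\frac12\tau-\varphi_1(Q_0)+\varphi_1(P_2)+\int_\alpha\varphi_1\rho^*\omega$, $\kappa_2(\varepsilon):=(-\frac12\tau-\varphi_1(Q_0))r_1+a(\varepsilon)+\int_\alpha\varphi_2\rho^*\omega$. The radius $\varepsilon>0$ (arbitrarily small) and the local coordinate $t$ are chosen so that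 $d(\varepsilon):\mathbb C^2\setminus N_\varepsilon\to\Omega:=d(\varepsilon)(\mathbb C^2\setminus N_\varepsilon)$ is a covering space with period group $\{0\}\times\mathbb Z$: for any $u\in\Omega+\kappa(\varepsilon)$ there is a neighbourhood $U$ of $u-\kappa(\varepsilon)$ with $d(\varepsilon)^{-1}(U)=\bigsqcup_{k\in\mathbb Z}V_k$, $V_k=V_0+(0,k)$, and $d(\varepsilon)|_{V_k}:V_k\to U$ biholomorphic. Define $\beta_k(u):=(d(\varepsilon)|_{V_k})^{-1}(u-\kappa(\varepsilon))$ for $u\in\Omega+\kappa(\varepsilon)$, $k\in\mathbb Z$. *)

theory Defs
  imports "HOL-Analysis.Analysis"
begin

definition ee :: "complex \<Rightarrow> complex" where
  "ee x = exp (2 * of_real pi * \<i> * x)"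

definition theta_char :: "complex \<Rightarrow> complex \<Rightarrow> complex \<Rightarrow> complex \<Rightarrow> complex" where
  "theta_char a b z \<tau> =
     infsum (\<lambda>n::int. ee ((of_int n + a)^2 * \<tau> / 2 + (of_int n + a) * (z + b))) UNIV"

definition BigTheta :: "complex \<Rightarrow> real \<Rightarrow> real \<Rightarrow> complex \<times> complex \<Rightarrow> complex" where
  "BigTheta \<tau> r1 r2 p =
     theta_char 0 0 (fst p) \<tau> + theta_char (- of_real r1) (of_real r2) (fst p) \<tau> * ee (snd p)"

text \<open>The map d(eps)(c) = (c1, c1 r1 + H_3(eps;c)/(2 pi i)), with H = H_3(eps; -).\<close>
definition dmap :: "real \<Rightarrow> (complex \<times> complex \<Rightarrow> complex) \<Rightarrow> complex \<times> complex \<Rightarrow> complex \<times> complex" where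
  "dmap r1 H c = (fst c, fst c * of_real r1 + H c / (2 * of_real pi * \<i>))"

definition Nset :: "(complex \<times> complex \<Rightarrow> complex) \<Rightarrow> (complex \<times> complex) set" where
  "Nset H = {c. deriv (\<lambda>w. H (fst c, w)) (snd c) = 0}"

definition Omega :: "real \<Rightarrow> (complex \<times> complex \<Rightarrow> complex) \<Rightarrow> (complex \<times> complex) set" where
  "Omega r1 H = dmap r1 H ` (UNIV - Nset H)"

definition cscale :: "complex \<Rightarrow> complex \<times> complex \<Rightarrow> complex \<times> complex" where
  "cscale a v = (a * fst v, a * snd v)"

definition holo2 :: "(complex \<times> complex \<Rightarrow> complex \<times> complex) \<Rightarrow> (complex \<times> complex) set \<Rightarrow> bool" where
  "holo2 f S \<longleftrightarrow> (\<forall>x\<in>S. \<exists>L. (f has_derivative L) (at x) \<and> (\<forall>a v. L (cscale a v) = cscale a (L v)))"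

definition biholo :: "(complex \<times> complex \<Rightarrow> complex \<times> complex) \<Rightarrow> (complex \<times> complex) set \<Rightarrow> (complex \<times> complex) set \<Rightarrow> bool" where
  "biholo f V U \<longleftrightarrow> open V \<and> open U \<and> f ` V = U \<and> inj_on f V \<and> holo2 f V \<and> holo2 (the_inv_into V f) U"

definition sheet :: "(complex \<times> complex) set \<Rightarrow> int \<Rightarrow> (complex \<times> complex) set" where
  "sheet V0 k = (\<lambda>c. c + (0, of_int k)) ` V0"

definition betak :: "real \<Rightarrow> (complex \<times> complex \<Rightarrow> complex) \<Rightarrow> complex \<times> complex \<Rightarrow> (complex \<times> complex) set \<Rightarrow> complex \<times> complex \<Rightarrow> int \<Rightarrow> complex \<times> complex" where
  "betak r1 H \<kappa> V0 u k = (THE c. c \<in> sheet V0 k \<and> dmap r1 H c = u - \<kappa>)"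

end

theory Submission
  imports Defs
begin

text \<open>The sheets are the translates \<open>V\<^sub>k = V\<^sub>0 + (0,k)\<close> and \<open>d(\<epsilon>)\<close> is invariant under these
  translations, so \<open>\<beta>\<^sub>k(u) = \<beta>\<^sub>0(u) + (0,k)\<close>. As \<open>e(w)\<close> has period 1, \<open>\<Theta>(z, w - k) = \<Theta>(z, w)\<close>,
  hence \<open>\<Theta>(u - \<beta>\<^sub>k(u))\<close> does not depend on \<open>k\<close> at all.\<close>

lemma ee_diff_of_int: "ee (w - of_int k) = ee w"
proof -
  have "ee (w - of_int k) = ee w / exp (2 * of_real pi * \<i> * of_int k)"
    unfolding ee_def by (simp add: right_diff_distrib exp_diff)
  also have "exp (2 * of_real pi * \<i> * of_int k) = 1"
    using exp_integer_2pi[of "of_int k"] by (simp add: mult.commute mult.left_commute)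
  finally show ?thesis by simp
qed

lemma BigTheta_diff_of_int_snd: "BigTheta \<tau> r1 r2 (p - (0, of_int k)) = BigTheta \<tau> r1 r2 p"
  unfolding BigTheta_def by (simp add: ee_diff_of_int)

lemma sheet_0 [simp]: "sheet V0 0 = V0"
  unfolding sheet_def by (simp flip: zero_prod_def)

lemma betak_eq_shift:
  assumes period: "\<And>c. dmap r1 H (c + (0, of_int j)) = dmap r1 H c"
    and inj: "inj_on (dmap r1 H) (sheet V0 j)"
    and c0: "c0 \<in> V0" "dmap r1 H c0 = u - \<kappa>"
  shows "betak r1 H \<kappa> V0 u j = c0 + (0, of_int j)"
  unfolding betak_def
proof (rule the_equality)
  have "c0 + (0, of_int j) \<in> sheet V0 j"
    unfolding sheet_def using c0(1) by blast
  moreover have "dmap r1 H (c0 + (0, of_int j)) = u - \<kappa>"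
    using period c0(2) by simp
  ultimately show shifted: "c0 + (0, of_int j) \<in> sheet V0 j \<and> dmap r1 H (c0 + (0, of_int j)) = u - \<kappa>"
    by blast
  fix c assume "c \<in> sheet V0 j \<and> dmap r1 H c = u - \<kappa>"
  with shifted show "c = c0 + (0, of_int j)"
    using inj_onD[OF inj] by metis
qed

theorem lemma6p5:
  fixes \<tau> :: complex and r1 r2 :: real
    and H :: "complex \<times> complex \<Rightarrow> complex"
    and \<kappa> u :: "complex \<times> complex"
    and U V0 :: "(complex \<times> complex) set"
    and k l :: int
  assumes tau: "Im \<tau> > 0"
    and period: "\<forall>c. \<forall>j::int. dmap r1 H (c + (0, of_int j)) = dmap r1 H c"
    and u: "u \<in> (\<lambda>x. x + \<kappa>) ` Omega r1 H"
    and U: "open U" "u - \<kappa> \<in> U"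
    and cover: "dmap r1 H -` U \<inter> (UNIV - Nset H) = (\<Union>j. sheet V0 j)"
    and disj: "\<forall>i j. i \<noteq> j \<longrightarrow> sheet V0 i \<inter> sheet V0 j = {}"
    and bih: "\<forall>j. biholo (dmap r1 H) (sheet V0 j) U"
  shows "BigTheta \<tau> r1 r2 (u - betak r1 H \<kappa> V0 u k) = 0 \<longleftrightarrow>
         BigTheta \<tau> r1 r2 (u - betak r1 H \<kappa> V0 u l) = 0"
proof -
  have "dmap r1 H ` V0 = U"
    using bih sheet_0 unfolding biholo_def by metis
  then obtain c0 where c0: "c0 \<in> V0" "dmap r1 H c0 = u - \<kappa>"
    using U(2) by (metis imageE)
  have "u - betak r1 H \<kappa> V0 u j = (u - c0) - (0, of_int j)" for j
    using betak_eq_shift[OF _ _ c0] period bih unfolding biholo_def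
    by (simp add: algebra_simps)
  then have "BigTheta \<tau> r1 r2 (u - betak r1 H \<kappa> V0 u j) = BigTheta \<tau> r1 r2 (u - c0)" for j
    by (simp only: BigTheta_diff_of_int_snd)
  then show ?thesis by simp
qed

end
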